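(* Let $\mathbf{k}$ be a field of characteristic zero, let $(C^\bullet,\partial)$ be a complex of finite-dimensional $\mathbf{k}$-vector spaces of odd length $d=2r-1$ with a chirality operator $\Gamma$, and let $\mathcal B=\Gamma\partial+\partial\Gamma$. If $\mathcal B:C^\bullet\to C^\bullet$ is bijective, then the complex $(C^\bullet,\partial)$ is acyclic and $C^j=C^j_+\oplus C^j_-$ for all $j=0,\dots,d$, where $C^j_+=\operatorname{Ker}(\partial\circ\Gamma)\cap C^j$ and $C^j_-=\operatorname{Ker}\partial\cap C^j$.
   Context: A chirality operator is an involution $\Gamma:C^\bullet\to C^\bullet$ with $\Gamma(C^j)=C^{d-j}$ for all $j$. *)

theory Defs
  imports Complex_Main
begin

text \<open>A cochain complex C^0 -> ... -> C^d of finite-dimensional vector spaces over a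
  field, realised inside an ambient vector space V (with scalar multiplication scale)
  which is the internal direct sum of the subspaces C j, j = 0..d.  The differential
  and the chirality operator are linear endomorphisms of V (= C^bullet).\<close>

definition internal_direct_sum ::
  "('k::field \<Rightarrow> 'v::ab_group_add \<Rightarrow> 'v) \<Rightarrow> nat \<Rightarrow> (nat \<Rightarrow> 'v set) \<Rightarrow> bool" where
  "internal_direct_sum scale d C \<longleftrightarrow>
     (\<forall>j\<le>d. module.subspace scale (C j)) \<and>
     (\<forall>v. \<exists>!x. (\<forall>j\<le>d. x j \<in> C j) \<and> (\<forall>j>d. x j = 0) \<and> v = (\<Sum>j\<le>d. x j))"

definition fin_dim_subspace :: "('k::field \<Rightarrow> 'v::ab_group_add \<Rightarrow> 'v) \<Rightarrow> 'v set \<Rightarrow> bool" where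
  "fin_dim_subspace scale S \<longleftrightarrow> (\<exists>B. finite B \<and> module.span scale B = S)"

definition chirality_operator ::
  "nat \<Rightarrow> (nat \<Rightarrow> 'v set) \<Rightarrow> ('v \<Rightarrow> 'v) \<Rightarrow> bool" where
  "chirality_operator d C \<Gamma> \<longleftrightarrow> (\<forall>v. \<Gamma> (\<Gamma> v) = v) \<and> (\<forall>j\<le>d. \<Gamma> ` C j = C (d - j))"

definition acyclic_complex :: "nat \<Rightarrow> (nat \<Rightarrow> 'v::zero set) \<Rightarrow> ('v \<Rightarrow> 'v) \<Rightarrow> bool" where
  "acyclic_complex d C dlt \<longleftrightarrow>
     (\<forall>j\<le>d. {x \<in> C j. dlt x = 0} = (if j = 0 then {0} else dlt ` C (j - 1)))"

definition direct_sum_of :: "'v::ab_group_add set \<Rightarrow> 'v set \<Rightarrow> 'v set \<Rightarrow> bool" where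
  "direct_sum_of S A B \<longleftrightarrow> A \<inter> B = {0} \<and> {a + b | a b. a \<in> A \<and> b \<in> B} = S"

end

theory Submission
  imports Defs
begin

text \<open>Since \<open>\<partial>\<partial> = 0\<close>, the operator \<open>\<B> = \<Gamma>\<partial> + \<partial>\<Gamma>\<close> commutes with \<open>\<partial>\<close>. Writing a cycle \<open>x\<close>
  as \<open>\<B> y\<close>, we get \<open>\<B> (\<partial>y) = \<partial>x = 0\<close>, so \<open>\<partial>y = 0\<close> and \<open>x = \<partial>(\<Gamma> y)\<close> is a boundary.
  Likewise every \<open>v = \<B> y\<close> splits as \<open>\<Gamma>\<partial>y + \<partial>\<Gamma>y\<close> with \<open>\<partial>\<Gamma>(\<Gamma>\<partial>y) = 0\<close> and \<open>\<partial>(\<partial>\<Gamma>y) = 0\<close>,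
  and a vector in both kernels is killed by the injective \<open>\<B>\<close>. These are statements about
  the whole space \<open>C\<^sup>\<bullet>\<close>; they pass to each degree because \<open>\<partial>\<close> shifts and \<open>\<Gamma>\<close> reflects degrees,
  so taking homogeneous components preserves both kernels and turns \<open>x = \<partial>y\<close> into
  \<open>x = \<partial>y\<^sub>j\<^sub>-\<^sub>1\<close>.\<close>

definition anticommutator :: "('v::plus \<Rightarrow> 'v) \<Rightarrow> ('v \<Rightarrow> 'v) \<Rightarrow> 'v \<Rightarrow> 'v" where
  "anticommutator f g = (\<lambda>v. f (g v) + g (f v))"

context
  fixes dlt \<Gamma> :: "'v::ab_group_add \<Rightarrow> 'v"
  assumes additive_dlt: "additive dlt"
    and dlt_dlt: "\<And>v. dlt (dlt v) = 0"
    and \<Gamma>_zero: "\<Gamma> 0 = 0"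
    and bij_anticommutator: "bij (anticommutator \<Gamma> dlt)"
begin

lemma dlt_anticommutator: "dlt (anticommutator \<Gamma> dlt v) = anticommutator \<Gamma> dlt (dlt v)"
  by (simp add: anticommutator_def additive.add[OF additive_dlt] dlt_dlt \<Gamma>_zero)

lemma anticommutator_zero: "anticommutator \<Gamma> dlt 0 = 0"
  by (simp add: anticommutator_def additive.zero[OF additive_dlt] \<Gamma>_zero)

lemma anticommutator_eq_0_iff: "anticommutator \<Gamma> dlt v = 0 \<longleftrightarrow> v = 0"
  using bij_anticommutator anticommutator_zero by (metis bij_def inj_eq)

lemma cycle_in_range_if_bij_anticommutator:
  assumes "dlt x = 0"
  shows "x \<in> range dlt"
proof -
  obtain y where y: "x = anticommutator \<Gamma> dlt y"
    using bij_anticommutator by (metis bij_def surj_def)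
  have "anticommutator \<Gamma> dlt (dlt y) = 0"
    using assms y dlt_anticommutator by simp
  then have "dlt y = 0"
    by (simp add: anticommutator_eq_0_iff)
  then have "x = dlt (\<Gamma> y)"
    using y by (simp add: anticommutator_def \<Gamma>_zero)
  then show ?thesis by simp
qed

lemma kernels_inter_eq_0_if_bij_anticommutator:
  "{x. dlt (\<Gamma> x) = 0} \<inter> {x. dlt x = 0} = {0}"
proof (intro equalityI subsetI)
  fix x assume "x \<in> {x. dlt (\<Gamma> x) = 0} \<inter> {x. dlt x = 0}"
  then have "anticommutator \<Gamma> dlt x = 0"
    by (simp add: anticommutator_def \<Gamma>_zero)
  then show "x \<in> {0}"
    by (simp add: anticommutator_eq_0_iff)
next
  fix x :: 'v assume "x \<in> {0}"
  then show "x \<in> {x. dlt (\<Gamma> x) = 0} \<inter> {x. dlt x = 0}"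
    by (simp add: additive.zero[OF additive_dlt] \<Gamma>_zero)
qed

lemma decompose_into_kernels_if_bij_anticommutator:
  assumes \<Gamma>_\<Gamma>: "\<And>v. \<Gamma> (\<Gamma> v) = v"
  shows "\<exists>a\<in>{x. dlt (\<Gamma> x) = 0}. \<exists>b\<in>{x. dlt x = 0}. v = a + b"
proof -
  obtain y where "v = \<Gamma> (dlt y) + dlt (\<Gamma> y)"
    using bij_anticommutator by (metis anticommutator_def bij_def surj_def)
  moreover have "dlt (\<Gamma> (\<Gamma> (dlt y))) = 0" "dlt (dlt (\<Gamma> y)) = 0"
    using \<Gamma>_\<Gamma> dlt_dlt by simp_all
  ultimately show ?thesis by blast
qed

end

locale graded_decomposition =
  fixes scale :: "'k::field \<Rightarrow> 'v::ab_group_add \<Rightarrow> 'v" and d :: nat and C :: "nat \<Rightarrow> 'v set"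
  assumes module: "module scale"
    and internal_direct_sum: "internal_direct_sum scale d C"
begin

definition component :: "nat \<Rightarrow> 'v \<Rightarrow> 'v" where
  "component j v = (THE x. (\<forall>i\<le>d. x i \<in> C i) \<and> (\<forall>i>d. x i = 0) \<and> v = (\<Sum>i\<le>d. x i)) j"

lemma decomposition_unique: "\<exists>!x. (\<forall>i\<le>d. x i \<in> C i) \<and> (\<forall>i>d. x i = 0) \<and> v = (\<Sum>i\<le>d. x i)"
  using internal_direct_sum unfolding internal_direct_sum_def by blast

lemma component_eqI:
  assumes "\<forall>i\<le>d. x i \<in> C i" "\<forall>i>d. x i = 0" "v = (\<Sum>i\<le>d. x i)"
  shows "component j v = x j"
  unfolding component_def using the1_equality[OF decomposition_unique] assms by simp

lemma components: "(\<forall>i\<le>d. component i v \<in> C i) \<and> (\<forall>i>d. component i v = 0) \<and> v = (\<Sum>i\<le>d. component i v)"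
  unfolding component_def using theI'[OF decomposition_unique] by blast

lemma component_in: "j \<le> d \<Longrightarrow> component j v \<in> C j"
  using components by blast

lemma component_beyond: "d < j \<Longrightarrow> component j v = 0"
  using components by blast

lemma sum_components: "(\<Sum>i\<le>d. component i v) = v"
  using components by metis

lemma subspace_C: "j \<le> d \<Longrightarrow> module.subspace scale (C j)"
  using internal_direct_sum by (simp add: internal_direct_sum_def)

lemma zero_in_C: "j \<le> d \<Longrightarrow> 0 \<in> C j"
  using module.subspace_0[OF module subspace_C] .

lemma add_in_C: "j \<le> d \<Longrightarrow> x \<in> C j \<Longrightarrow> y \<in> C j \<Longrightarrow> x + y \<in> C j"
  using module.subspace_add[OF module subspace_C] .

lemma component_homogeneous:
  assumes "k \<le> d" "v \<in> C k"
  shows "component j v = (if j = k then v else 0)"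
  by (rule component_eqI) (use assms zero_in_C in \<open>auto simp: sum.delta\<close>)

lemma component_zero [simp]: "component j 0 = 0"
  using component_homogeneous[of 0 0] zero_in_C by simp

lemma component_add: "component j (u + w) = component j u + component j w"
  by (rule component_eqI) (use components add_in_C in \<open>auto simp: sum.distrib\<close>)

lemma component_raising_map:
  assumes f: "additive f"
    and raise: "\<forall>j<d. f ` C j \<subseteq> C (j + 1)"
    and top: "f ` C d \<subseteq> {0}"
  shows "component j (f v) = (if j = 0 then 0 else f (component (j - 1) v))"
proof -
  define y where "y i = (if i = 0 then 0 else f (component (i - 1) v))" for i
  have f_top: "f (component d v) = 0"
    using top component_in[of d v] by auto
  have "component j (f v) = y j"
  proof (rule component_eqI)
    show "\<forall>i\<le>d. y i \<in> C i"
    proof (intro allI impI)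
      fix i assume "i \<le> d"
      show "y i \<in> C i"
      proof (cases i)
        case 0
        then show ?thesis using zero_in_C by (simp add: y_def)
      next
        case (Suc k)
        then have "k < d" "component k v \<in> C k"
          using \<open>i \<le> d\<close> component_in by auto
        then have "f (component k v) \<in> C (k + 1)"
          using raise by blast
        then show ?thesis using Suc by (simp add: y_def)
      qed
    qed
    show "\<forall>i>d. y i = 0"
    proof (intro allI impI)
      fix i assume "d < i"
      then show "y i = 0"
        using f_top component_beyond[of "i - 1"] additive.zero[OF f]
        by (cases "i - 1 = d") (simp_all add: y_def)
    qed
    have "f v = f (\<Sum>i\<le>d. component i v)"
      by (simp only: sum_components)
    also have "\<dots> = (\<Sum>i\<le>d. f (component i v))"
      by (rule additive.sum[OF f])
    also have "\<dots> = (\<Sum>i<d. f (component i v))"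
      by (subst lessThan_Suc_atMost[symmetric], subst sum.lessThan_Suc) (simp add: f_top)
    also have "\<dots> = (\<Sum>i\<le>d. y i)"
      by (subst sum.atMost_shift) (simp add: y_def)
    finally show "f v = (\<Sum>i\<le>d. y i)" .
  qed
  then show ?thesis by (simp add: y_def)
qed

lemma component_reflecting_map:
  assumes f: "additive f"
    and reflect: "\<forall>j\<le>d. f ` C j \<subseteq> C (d - j)"
    and "j \<le> d"
  shows "component j (f v) = f (component (d - j) v)"
proof -
  define y where "y i = (if i \<le> d then f (component (d - i) v) else 0)" for i
  have "component j (f v) = y j"
  proof (rule component_eqI)
    show "\<forall>i\<le>d. y i \<in> C i"
    proof (intro allI impI)
      fix i assume "i \<le> d"
      have "f ` C (d - i) \<subseteq> C (d - (d - i))"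
        by (rule reflect[rule_format]) simp
      moreover have "component (d - i) v \<in> C (d - i)"
        by (simp add: component_in)
      ultimately have "f (component (d - i) v) \<in> C (d - (d - i))"
        by blast
      then show "y i \<in> C i"
        using \<open>i \<le> d\<close> by (simp add: y_def)
    qed
    show "\<forall>i>d. y i = 0"
      by (simp add: y_def)
    have "f v = f (\<Sum>i\<le>d. component i v)"
      by (simp only: sum_components)
    also have "\<dots> = (\<Sum>i\<le>d. f (component i v))"
      by (rule additive.sum[OF f])
    also have "\<dots> = (\<Sum>i\<le>d. y i)"
      by (rule sum.reindex_bij_witness[where i="\<lambda>i. d - i" and j="\<lambda>i. d - i"]) (auto simp: y_def)
    finally show "f v = (\<Sum>i\<le>d. y i)" .
  qed
  then show ?thesis using assms by (simp add: y_def)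
qed

lemma direct_sum_of_homogeneous_parts:
  assumes inter: "A \<inter> B = {0}"
    and sum: "\<And>v. \<exists>a\<in>A. \<exists>b\<in>B. v = a + b"
    and A: "\<And>v i. v \<in> A \<Longrightarrow> component i v \<in> A"
    and B: "\<And>v i. v \<in> B \<Longrightarrow> component i v \<in> B"
    and "j \<le> d"
  shows "direct_sum_of (C j) (C j \<inter> A) (C j \<inter> B)"
  unfolding direct_sum_of_def
proof (intro conjI equalityI subsetI)
  show "x \<in> {0}" if "x \<in> C j \<inter> A \<inter> (C j \<inter> B)" for x
    using that inter by blast
  show "x \<in> C j \<inter> A \<inter> (C j \<inter> B)" if "x \<in> {0}" for x
    using that inter zero_in_C \<open>j \<le> d\<close> by blast
  show "x \<in> C j" if "x \<in> {a + b |a b. a \<in> C j \<inter> A \<and> b \<in> C j \<inter> B}" for x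
    using that add_in_C \<open>j \<le> d\<close> by blast
  fix x assume x: "x \<in> C j"
  obtain a b where ab: "a \<in> A" "b \<in> B" "x = a + b"
    using sum by blast
  have "x = component j a + component j b"
    using x \<open>j \<le> d\<close> ab(3) by (simp add: component_homogeneous flip: component_add)
  then show "x \<in> {a + b |a b. a \<in> C j \<inter> A \<and> b \<in> C j \<inter> B}"
    using A B ab component_in \<open>j \<le> d\<close> by blast
qed

end

locale graded_complex = graded_decomposition scale d C
  for scale :: "'k::field \<Rightarrow> 'v::ab_group_add \<Rightarrow> 'v" and d C +
  fixes dlt :: "'v \<Rightarrow> 'v"
  assumes additive_dlt: "additive dlt"
    and dlt_raise: "\<forall>j<d. dlt ` C j \<subseteq> C (j + 1)"
    and dlt_top: "dlt ` C d \<subseteq> {0}"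
    and dlt_dlt: "dlt (dlt v) = 0"
begin

lemma component_dlt: "component j (dlt v) = (if j = 0 then 0 else dlt (component (j - 1) v))"
  using component_raising_map[OF additive_dlt dlt_raise dlt_top] .

lemma dlt_component_eq_0: "dlt v = 0 \<Longrightarrow> dlt (component j v) = 0"
  using component_dlt[of "Suc j" v] by simp

lemma dlt_reflected_component_eq_0:
  assumes "additive \<Gamma>" "\<forall>j\<le>d. \<Gamma> ` C j \<subseteq> C (d - j)" "dlt (\<Gamma> v) = 0"
  shows "dlt (\<Gamma> (component j v)) = 0"
proof (cases "j \<le> d")
  case True
  then have "\<Gamma> (component j v) = component (d - j) (\<Gamma> v)"
    using component_reflecting_map[OF assms(1,2)] by simp
  then show ?thesis
    using dlt_component_eq_0[OF assms(3)] by simp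
next
  case False
  then show ?thesis
    using component_beyond additive.zero[OF assms(1)] additive.zero[OF additive_dlt] by simp
qed

lemma acyclic_complex_if_cycles_in_range:
  assumes "\<And>x. dlt x = 0 \<Longrightarrow> x \<in> range dlt"
  shows "acyclic_complex d C dlt"
  unfolding acyclic_complex_def
proof (intro allI impI equalityI subsetI)
  fix j x assume j: "j \<le> d" and x: "x \<in> {x \<in> C j. dlt x = 0}"
  then obtain y where "x = dlt y"
    using assms by blast
  then have "x = component j (dlt y)"
    using x j component_homogeneous[of j x j] by simp
  then have "x = (if j = 0 then 0 else dlt (component (j - 1) y))"
    by (simp only: component_dlt)
  then show "x \<in> (if j = 0 then {0} else dlt ` C (j - 1))"
    using component_in j by auto
next
  fix j x assume j: "j \<le> d" and x: "x \<in> (if j = 0 then {0} else dlt ` C (j - 1))"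
  show "x \<in> {x \<in> C j. dlt x = 0}"
  proof (cases j)
    case 0
    then show ?thesis
      using x zero_in_C additive.zero[OF additive_dlt] by simp
  next
    case (Suc k)
    then obtain w where "w \<in> C k" "x = dlt w"
      using x by auto
    moreover have "k < d"
      using Suc j by simp
    ultimately show ?thesis
      using Suc dlt_raise dlt_dlt by fastforce
  qed
qed

end

theorem lemma5p1:
  fixes scale :: "'k::field_char_0 \<Rightarrow> 'v::ab_group_add \<Rightarrow> 'v"
    and r d :: nat and C :: "nat \<Rightarrow> 'v set" and dlt \<Gamma> :: "'v \<Rightarrow> 'v"
  assumes vs: "vector_space scale"
    and r: "r \<ge> 1" and d: "d = 2 * r - 1"
    and dsum: "internal_direct_sum scale d C"
    and findim: "\<forall>j\<le>d. fin_dim_subspace scale (C j)"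
    and lin_d: "Vector_Spaces.linear scale scale dlt"
    and deg_d: "\<forall>j<d. dlt ` C j \<subseteq> C (j + 1)"
    and top_d: "dlt ` C d \<subseteq> {0}"
    and dd: "\<forall>v. dlt (dlt v) = 0"
    and lin_G: "Vector_Spaces.linear scale scale \<Gamma>"
    and chir: "chirality_operator d C \<Gamma>"
    and B_bij: "bij (\<lambda>v. \<Gamma> (dlt v) + dlt (\<Gamma> v))"
  shows "acyclic_complex d C dlt \<and>
         (\<forall>j\<le>d. direct_sum_of (C j) {x \<in> C j. dlt (\<Gamma> x) = 0} {x \<in> C j. dlt x = 0})"
proof -
  have additive_dlt: "additive dlt" and additive_\<Gamma>: "additive \<Gamma>"
    using lin_d lin_G by (simp_all add: additive_def module_hom.add flip: module_hom_iff_linear)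
  have \<Gamma>_\<Gamma>: "\<And>v. \<Gamma> (\<Gamma> v) = v" and \<Gamma>_reflect: "\<forall>j\<le>d. \<Gamma> ` C j \<subseteq> C (d - j)"
    using chir by (auto simp: chirality_operator_def)
  have bij: "bij (anticommutator \<Gamma> dlt)"
    using B_bij by (simp add: anticommutator_def)
  interpret graded_complex scale d C dlt
    using vs dsum additive_dlt deg_d top_d dd
    by (simp add: graded_complex_def graded_complex_axioms_def graded_decomposition_def
        module_iff_vector_space)
  have \<Gamma>_zero: "\<Gamma> 0 = 0"
    by (rule additive.zero[OF additive_\<Gamma>])
  note bij_hyps = additive_dlt dlt_dlt \<Gamma>_zero bij
  have "acyclic_complex d C dlt"
    using cycle_in_range_if_bij_anticommutator[OF bij_hyps]
    by (rule acyclic_complex_if_cycles_in_range)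
  moreover have "direct_sum_of (C j) {x \<in> C j. dlt (\<Gamma> x) = 0} {x \<in> C j. dlt x = 0}"
    if "j \<le> d" for j
  proof -
    have "direct_sum_of (C j) (C j \<inter> {x. dlt (\<Gamma> x) = 0}) (C j \<inter> {x. dlt x = 0})"
      by (rule direct_sum_of_homogeneous_parts[OF kernels_inter_eq_0_if_bij_anticommutator[OF bij_hyps]
            decompose_into_kernels_if_bij_anticommutator[OF bij_hyps \<Gamma>_\<Gamma>] _ _ that])
        (simp_all add: dlt_reflected_component_eq_0[OF additive_\<Gamma> \<Gamma>_reflect] dlt_component_eq_0)
    moreover have "C j \<inter> {x. dlt (\<Gamma> x) = 0} = {x \<in> C j. dlt (\<Gamma> x) = 0}"
      and "C j \<inter> {x. dlt x = 0} = {x \<in> C j. dlt x = 0}"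
      by blast+
    ultimately show ?thesis by simp
  qed
  ultimately show ?thesis by blast
qed

end
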